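(* Let $X$ be a real Hilbert space, and suppose that $A,B$ are bodies in $X$ and that $A$ is LUR. Then the couple $(A,B)$ is stable.
   Context: A body is a closed convex subset of $X$ with nonempty interior. A point $x\in\partial A$ of a body $A$ is an LUR (locally uniformly rotund) point of $A$ if for each $\epsilon>0$ there is $\delta>0$ such that whenever $y\in A$ and $\mathrm{dist}(\partial A,(x+y)/2)<\delta$ we have $\|x-y\|<\epsilon$; $A$ is LUR if every point of $\partial A$ is an LUR point. $P_C$ is the metric projection onto a closed convex nonempty set $C$; $B_X$ the closed unit ball; $\mathrm{dist}(x,S)=\inf_{s\in S}\|x-s\|$, $\mathrm{dist}(S,T)=\inf_{s\in S}\mathrm{dist}(s,T)$. $E=\{a\in A:\mathrm{dist}(a,B)=\mathrm{dist}(A,B)\}$, $F=\{b\in B:\mathrm{dist}(b,A)=\mathrm{dist}(A,B)\}$. Attouch–Wets convergence: for nonempty closed $C,D$ and $N\in\mathbb N$ let $e_N(C,D)=\sup_{c\in C\cap NB_X}\mathrm{dist}(c,D)$ ($0$ if $C\cap NB_X=\emptyset$), $h_N(C,D)=\max\{e_N(C,D),e_N(D,C)\}$; $C_j\to C$ if $h_N(C_j,C)\to0$ for every $N$. Given sequences $\{A_n\},\{B_n\}$ of closed convex nonempty sets and $a_0\in X$, the perturbed alternating projections sequences are $b_n=P_{B_n}(a_{n-1})$, $a_n=P_{A_n}(b_n)$ ($n\in\mathbb N$). The couple $(A,B)$ (with $E,F$ nonempty) is stable if for every choice of sequences $\{A_n\},\{B_n\}$ of closed convex nonempty sets converging in the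 Attouch–Wets sense to $A$ and $B$ respectively, and every $a_0\in X$, the corresponding perturbed alternating projections sequences $\{a_n\}$ and $\{b_n\}$ converge in norm. *)

theory Defs
  imports "HOL-Analysis.Analysis"
begin

definition body :: "'a::real_normed_vector set \<Rightarrow> bool" where
  "body A \<longleftrightarrow> closed A \<and> convex A \<and> interior A \<noteq> {}"

definition LUR_point :: "'a::real_normed_vector set \<Rightarrow> 'a \<Rightarrow> bool" where
  "LUR_point A x \<longleftrightarrow> x \<in> frontier A \<and>
     (\<forall>\<epsilon>>0. \<exists>\<delta>>0. \<forall>y\<in>A. infdist ((1/2) *\<^sub>R (x + y)) (frontier A) < \<delta> \<longrightarrow> norm (x - y) < \<epsilon>)"

definition LUR :: "'a::real_normed_vector set \<Rightarrow> bool" where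
  "LUR A \<longleftrightarrow> (\<forall>x\<in>frontier A. LUR_point A x)"

text \<open>Metric projection onto C (well defined and unique for closed convex nonempty C
  in a Hilbert space).\<close>
definition metric_proj :: "'a::real_normed_vector set \<Rightarrow> 'a \<Rightarrow> 'a" where
  "metric_proj C x = (SOME y. y \<in> C \<and> (\<forall>z\<in>C. dist x y \<le> dist x z))"

text \<open>dist(A,B) = inf over a in A of dist(a,B); sets E and F.\<close>
definition set_dist :: "'a::real_normed_vector set \<Rightarrow> 'a set \<Rightarrow> real" where
  "set_dist S T = (INF s\<in>S. infdist s T)"

definition best_A :: "'a::real_normed_vector set \<Rightarrow> 'a set \<Rightarrow> 'a set" where
  "best_A A B = {a\<in>A. infdist a B = set_dist A B}"

definition best_B :: "'a::real_normed_vector set \<Rightarrow> 'a set \<Rightarrow> 'a set" where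
  "best_B A B = {b\<in>B. infdist b A = set_dist A B}"

definition aw_exc :: "nat \<Rightarrow> 'a::real_normed_vector set \<Rightarrow> 'a set \<Rightarrow> real" where
  "aw_exc N C D = (if C \<inter> cball 0 (real N) = {} then 0
                   else (SUP c\<in>C \<inter> cball 0 (real N). infdist c D))"

definition aw_h :: "nat \<Rightarrow> 'a::real_normed_vector set \<Rightarrow> 'a set \<Rightarrow> real" where
  "aw_h N C D = max (aw_exc N C D) (aw_exc N D C)"

definition AW_converges :: "(nat \<Rightarrow> 'a::real_normed_vector set) \<Rightarrow> 'a set \<Rightarrow> bool" where
  "AW_converges Cs C \<longleftrightarrow> (\<forall>N::nat. N \<ge> 1 \<longrightarrow> (\<lambda>j. aw_h N (Cs j) C) \<longlonglongrightarrow> 0)"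

text \<open>Stability of the couple (A,B) (defined for couples with E, F nonempty).
  Perturbed alternating projections: b_n = P_{B_n}(a_{n-1}), a_n = P_{A_n}(b_n), n \<ge> 1.\<close>
definition stable :: "'a::real_normed_vector set \<Rightarrow> 'a set \<Rightarrow> bool" where
  "stable A B \<longleftrightarrow>
     (\<forall>As Bs. (\<forall>n. closed (As n) \<and> convex (As n) \<and> As n \<noteq> {}) \<and>
              (\<forall>n. closed (Bs n) \<and> convex (Bs n) \<and> Bs n \<noteq> {}) \<and>
              AW_converges As A \<and> AW_converges Bs B \<longrightarrow>
        (\<forall>a b :: nat \<Rightarrow> 'a.
            (\<forall>n. b (Suc n) = metric_proj (Bs (Suc n)) (a n) \<and>
                 a (Suc n) = metric_proj (As (Suc n)) (b (Suc n))) \<longrightarrow>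
            convergent a \<and> convergent b))"

end

theory Submission
  imports Defs
begin

lemma norm_diff_sq_midpoint:
  fixes x y z :: "'a::real_inner"
  shows "norm (y - z)^2 = 2 * norm (x - y)^2 + 2 * norm (x - z)^2 - 4 * norm (x - midpoint y z)^2"
  by (simp add: midpoint_def power2_norm_eq_inner inner_diff inner_add inner_commute
      algebra_simps)

lemma convex_midpoint_in:
  assumes "convex C" "y \<in> C" "z \<in> C"
  shows "midpoint y z \<in> C"
  using closed_segment_subset[OF assms(2,3,1)] midpoint_in_closed_segment by (rule subsetD)

lemma infdist_less_imp_near:
  assumes "S \<noteq> {}" "infdist x S < r"
  shows "\<exists>y\<in>S. dist x y < r"
proof -
  have "(INF y\<in>S. dist x y) < r" using assms by (simp add: infdist_notempty)
  then show ?thesis using assms(1) by (simp add: cINF_less_iff)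
qed

lemma metric_proj_exists:
  fixes C :: "'a::{real_inner,complete_space} set"
  assumes "closed C" "convex C" "C \<noteq> {}"
  shows "\<exists>y\<in>C. \<forall>z\<in>C. dist x y \<le> dist x z"
proof -
  define \<delta> where "\<delta> = infdist x C"
  have \<delta>_le: "\<delta> \<le> dist x y" if "y \<in> C" for y
    unfolding \<delta>_def using that by (rule infdist_le)
  have "\<forall>k. \<exists>y\<in>C. dist x y < \<delta> + inverse (real (Suc k))"
    using infdist_less_imp_near[OF \<open>C \<noteq> {}\<close>] by (simp add: \<delta>_def)
  then obtain z where zC: "\<And>k. z k \<in> C" and z_lt: "\<And>k. dist x (z k) < \<delta> + inverse (real (Suc k))"
    by metis
  have "(\<lambda>k. dist x (z k)) \<longlonglongrightarrow> \<delta>"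
  proof (rule tendsto_sandwich)
    show "\<forall>\<^sub>F k in sequentially. \<delta> \<le> dist x (z k)" using \<delta>_le zC by simp
    show "\<forall>\<^sub>F k in sequentially. dist x (z k) \<le> \<delta> + inverse (real (Suc k))"
      using z_lt by (simp add: less_imp_le)
    show "(\<lambda>k. \<delta> + inverse (real (Suc k))) \<longlonglongrightarrow> \<delta>"
      using tendsto_add[OF tendsto_const LIMSEQ_inverse_real_of_nat] by simp
  qed simp
  define D where "D k = dist x (z k)^2 - \<delta>^2" for k
  have "D \<longlonglongrightarrow> \<delta>^2 - \<delta>^2"
    unfolding D_def by (intro tendsto_intros) fact
  then have D_lim: "D \<longlonglongrightarrow> 0" by simp
  have z_close: "norm (z k - z m)^2 \<le> 2 * D k + 2 * D m" for k m
  proof -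
    have "\<delta> \<le> norm (x - midpoint (z k) (z m))"
      using \<delta>_le convex_midpoint_in[OF \<open>convex C\<close> zC zC] by (simp add: dist_norm)
    then have "\<delta>^2 \<le> norm (x - midpoint (z k) (z m))^2"
      by (rule power_mono) (simp_all add: \<delta>_def infdist_nonneg)
    then have "norm (z k - z m)^2 \<le> 2 * norm (x - z k)^2 + 2 * norm (x - z m)^2 - 4 * \<delta>^2"
      unfolding norm_diff_sq_midpoint[of "z k" "z m" x] by simp
    then show ?thesis by (simp add: D_def dist_norm algebra_simps)
  qed
  have "Cauchy z"
  proof (rule metric_CauchyI)
    fix \<epsilon> :: real assume "0 < \<epsilon>"
    then have "\<forall>\<^sub>F k in sequentially. D k < \<epsilon>^2 / 4"
      using D_lim \<open>0 < \<epsilon>\<close> by (intro order_tendstoD) auto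
    then obtain M where M: "\<And>k. k \<ge> M \<Longrightarrow> D k < \<epsilon>^2 / 4"
      unfolding eventually_sequentially by blast
    have "dist (z k) (z m) < \<epsilon>" if "k \<ge> M" "m \<ge> M" for k m
    proof -
      have "norm (z k - z m)^2 < \<epsilon>^2" using z_close[of k m] M[OF that(1)] M[OF that(2)] by linarith
      then show ?thesis using \<open>0 < \<epsilon>\<close> by (simp add: dist_norm power_less_imp_less_base)
    qed
    then show "\<exists>M. \<forall>k\<ge>M. \<forall>m\<ge>M. dist (z k) (z m) < \<epsilon>" by blast
  qed
  then obtain p where z_p: "z \<longlonglongrightarrow> p"
    using Cauchy_convergent_iff convergent_def by blast
  have "dist x p = \<delta>"
    using tendsto_dist[OF tendsto_const z_p] \<open>(\<lambda>k. dist x (z k)) \<longlonglongrightarrow> \<delta>\<close>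
    by (rule LIMSEQ_unique)
  then have "\<forall>y\<in>C. dist x p \<le> dist x y" using \<delta>_le by simp
  moreover have "p \<in> C" using closed_sequentially[OF \<open>closed C\<close>] zC z_p by blast
  ultimately show ?thesis by (rule bexI)
qed

context
  fixes C :: "'a::{real_inner,complete_space} set"
  assumes closed: "closed C" and convex: "convex C" and nonempty: "C \<noteq> {}"
begin

lemma metric_proj_minimal: "metric_proj C x \<in> C \<and> (\<forall>z\<in>C. dist x (metric_proj C x) \<le> dist x z)"
proof -
  have "\<exists>y. y \<in> C \<and> (\<forall>z\<in>C. dist x y \<le> dist x z)"
    using metric_proj_exists[OF closed convex nonempty] by blast
  then show ?thesis unfolding metric_proj_def by (rule someI_ex)
qed

lemma metric_proj_in: "metric_proj C x \<in> C"
  using metric_proj_minimal by blast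

lemma norm_metric_proj_le: "z \<in> C \<Longrightarrow> norm (x - metric_proj C x) \<le> norm (x - z)"
  using metric_proj_minimal by (simp add: dist_norm)

lemma norm_metric_proj_eq_infdist: "norm (x - metric_proj C x) = infdist x C"
proof (rule antisym)
  show "norm (x - metric_proj C x) \<le> infdist x C"
    using norm_metric_proj_le nonempty
    by (simp add: infdist_notempty dist_norm cINF_greatest)
  show "infdist x C \<le> norm (x - metric_proj C x)"
    using infdist_le[OF metric_proj_in] by (simp add: dist_norm)
qed

lemma metric_proj_inner_le: "z \<in> C \<Longrightarrow> inner (x - metric_proj C x) (z - metric_proj C x) \<le> 0"
  using any_closest_point_dot[OF convex closed] metric_proj_minimal by blast

lemma metric_proj_pythagorean:
  assumes "z \<in> C"
  shows "norm (z - metric_proj C x)^2 + norm (x - metric_proj C x)^2 \<le> norm (x - z)^2"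
proof -
  define p where "p = metric_proj C x"
  have "(x - p) - (z - p) = x - z" by simp
  then show ?thesis
    using metric_proj_inner_le[OF assms, of x] dot_norm_neg[of "x - p" "z - p"]
    unfolding p_def by simp
qed

lemma metric_proj_firmly_nonexpansive:
  "norm (metric_proj C x - metric_proj C y)^2
     + norm ((x - metric_proj C x) - (y - metric_proj C y))^2 \<le> norm (x - y)^2"
proof -
  define p q where "p = metric_proj C x" and "q = metric_proj C y"
  have "inner (x - p) (q - p) \<le> 0" "inner (y - q) (p - q) \<le> 0"
    unfolding p_def q_def by (simp_all add: metric_proj_inner_le metric_proj_in)
  then have "0 \<le> inner (p - q) ((x - p) - (y - q))"
    by (simp add: inner_diff inner_commute)
  moreover have "(p - q) + ((x - p) - (y - q)) = x - y" by simp
  ultimately show ?thesis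
    using dot_norm[of "p - q" "(x - p) - (y - q)"] unfolding p_def q_def by simp
qed

lemma metric_proj_nonexpansive: "norm (metric_proj C x - metric_proj C y) \<le> norm (x - y)"
proof -
  have "norm (metric_proj C x - metric_proj C y)^2
      \<le> norm (metric_proj C x - metric_proj C y)^2 + norm ((x - metric_proj C x) - (y - metric_proj C y))^2"
    by simp
  also have "\<dots> \<le> norm (x - y)^2" by (rule metric_proj_firmly_nonexpansive)
  finally have "norm (metric_proj C x - metric_proj C y)^2 \<le> norm (x - y)^2" .
  then show ?thesis by (rule power2_le_imp_le) simp
qed

end


lemma infdist_le_aw_exc:
  assumes "D \<noteq> {}" "c \<in> C" "norm c \<le> real N"
  shows "infdist c D \<le> aw_exc N C D"
proof -
  obtain d where "d \<in> D" using assms(1) by blast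
  have "bdd_above ((\<lambda>c. infdist c D) ` (C \<inter> cball 0 (real N)))"
  proof (rule bdd_aboveI2)
    fix y assume "y \<in> C \<inter> cball 0 (real N)"
    then have "norm y \<le> real N" by simp
    moreover have "infdist y D \<le> norm y + norm d"
      using infdist_le[OF \<open>d \<in> D\<close>, of y] norm_triangle_ineq4[of y d] by (simp add: dist_norm)
    ultimately show "infdist y D \<le> real N + norm d" by linarith
  qed
  moreover have "c \<in> C \<inter> cball 0 (real N)" using assms(2,3) by simp
  ultimately have "infdist c D \<le> (SUP c\<in>C \<inter> cball 0 (real N). infdist c D)"
    by (rule cSUP_upper2) simp
  then show ?thesis unfolding aw_exc_def using \<open>c \<in> C \<inter> cball 0 (real N)\<close> by auto
qed

lemma AW_converges_eventually_aw_h_less: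
  assumes "AW_converges Cs C" "0 < \<epsilon>"
  obtains N :: nat where "R \<le> real N" "\<forall>\<^sub>F j in sequentially. aw_h N (Cs j) C < \<epsilon>"
proof
  define N where "N = nat \<lceil>R\<rceil> + 1"
  show "R \<le> real N" unfolding N_def by linarith
  have "(\<lambda>j. aw_h N (Cs j) C) \<longlonglongrightarrow> 0"
    using assms(1) unfolding AW_converges_def N_def by simp
  then show "\<forall>\<^sub>F j in sequentially. aw_h N (Cs j) C < \<epsilon>"
    using assms(2) by (rule order_tendstoD)
qed

context
  fixes Cs :: "nat \<Rightarrow> 'a::real_normed_vector set" and C :: "'a set"
  assumes AW: "AW_converges Cs C" and nonempty: "C \<noteq> {}" and nonempty_seq: "\<And>j. Cs j \<noteq> {}"
begin

lemma AW_converges_eventually_near_limit: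
  assumes "0 < \<epsilon>"
  shows "\<forall>\<^sub>F j in sequentially. \<forall>x\<in>Cs j. norm x \<le> R \<longrightarrow> (\<exists>y\<in>C. dist x y < \<epsilon>)"
proof -
  obtain N where N: "R \<le> real N" "\<forall>\<^sub>F j in sequentially. aw_h N (Cs j) C < \<epsilon>"
    using AW_converges_eventually_aw_h_less[OF AW assms] .
  show ?thesis
    using N(2)
  proof (rule eventually_mono, intro ballI impI)
    fix j x assume "aw_h N (Cs j) C < \<epsilon>" "x \<in> Cs j" "norm x \<le> R"
    then have "infdist x C < \<epsilon>"
      using infdist_le_aw_exc[OF nonempty, of x "Cs j" N] N(1) by (simp add: aw_h_def)
    then show "\<exists>y\<in>C. dist x y < \<epsilon>" by (rule infdist_less_imp_near[OF nonempty])
  qed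
qed

lemma AW_converges_eventually_near_seq:
  assumes "0 < \<epsilon>"
  shows "\<forall>\<^sub>F j in sequentially. \<forall>x\<in>C. norm x \<le> R \<longrightarrow> (\<exists>y\<in>Cs j. dist x y < \<epsilon>)"
proof -
  obtain N where N: "R \<le> real N" "\<forall>\<^sub>F j in sequentially. aw_h N (Cs j) C < \<epsilon>"
    using AW_converges_eventually_aw_h_less[OF AW assms] .
  show ?thesis
    using N(2)
  proof (rule eventually_mono, intro ballI impI)
    fix j x assume "aw_h N (Cs j) C < \<epsilon>" "x \<in> C" "norm x \<le> R"
    then have "infdist x (Cs j) < \<epsilon>"
      using infdist_le_aw_exc[OF nonempty_seq[of j], of x C N] N(1) by (simp add: aw_h_def)
    then show "\<exists>y\<in>Cs j. dist x y < \<epsilon>" by (rule infdist_less_imp_near[OF nonempty_seq])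
  qed
qed

end

lemma metric_proj_near_minimizer:
  fixes C :: "'a::{real_inner,complete_space} set"
  assumes "closed C" "convex C" "C \<noteq> {}" and "z \<in> C" "0 \<le> t"
    and "norm (x - z) \<le> norm (x - metric_proj C x) + t"
  shows "norm (z - metric_proj C x)^2 \<le> t * (2 * norm (x - metric_proj C x) + t)"
proof -
  define \<rho> where "\<rho> = norm (x - metric_proj C x)"
  have "norm (x - z)^2 \<le> (\<rho> + t)^2"
    using assms(6) by (intro power_mono) (simp_all add: \<rho>_def)
  moreover have "(\<rho> + t)^2 = \<rho>^2 + t * (2 * \<rho> + t)"
    by (simp add: power2_eq_square algebra_simps)
  ultimately show ?thesis
    using metric_proj_pythagorean[OF assms(1-4), of x] unfolding \<rho>_def by linarith
qed

context
  fixes Cs :: "nat \<Rightarrow> 'a::{real_inner,complete_space} set" and C :: "'a set"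
  assumes AW: "AW_converges Cs C"
    and closed_seq: "\<And>j. closed (Cs j)" and convex_seq: "\<And>j. convex (Cs j)"
    and nonempty_seq: "\<And>j. Cs j \<noteq> {}"
begin

lemma metric_proj_AW_tendsto:
  assumes "closed C" "convex C" "C \<noteq> {}"
  shows "(\<lambda>j. metric_proj (Cs j) x) \<longlonglongrightarrow> metric_proj C x"
proof (rule tendstoI)
  fix \<epsilon> :: real assume "0 < \<epsilon>"
  define p \<rho> where "p = metric_proj C x" and "\<rho> = norm (x - metric_proj C x)"
  define \<tau> where "\<tau> = min 1 (min (\<epsilon>/2) (\<epsilon>^2 / (16 * (\<rho> + 1))))"
  have "0 \<le> \<rho>" by (simp add: \<rho>_def)
  have "0 < \<tau>" using \<open>0 < \<epsilon>\<close> \<open>0 \<le> \<rho>\<close> by (simp add: \<tau>_def)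
  moreover have "\<tau> \<le> 1" unfolding \<tau>_def by (rule min.cobounded1)
  moreover have "\<tau> \<le> \<epsilon>/2" unfolding \<tau>_def by (intro min.coboundedI2 min.cobounded1)
  ultimately have \<tau>: "0 < \<tau>" "\<tau> \<le> 1" "\<tau> \<le> \<epsilon>/2" by blast+
  have "\<tau> \<le> \<epsilon>^2 / (16 * (\<rho> + 1))"
    unfolding \<tau>_def by (intro min.coboundedI2 min.cobounded2)
  then have \<tau>_small: "\<tau> * (16 * (\<rho> + 1)) \<le> \<epsilon>^2"
    using \<open>0 \<le> \<rho>\<close> by (simp add: pos_le_divide_eq)
  define R where "R = norm x + \<rho> + 2"
  have "\<forall>\<^sub>F j in sequentially. (\<forall>y\<in>Cs j. norm y \<le> R \<longrightarrow> (\<exists>z\<in>C. dist y z < \<tau>))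
      \<and> (\<forall>y\<in>C. norm y \<le> R \<longrightarrow> (\<exists>z\<in>Cs j. dist y z < \<tau>))"
    using AW_converges_eventually_near_limit[OF AW \<open>C \<noteq> {}\<close> nonempty_seq \<tau>(1)]
      AW_converges_eventually_near_seq[OF AW \<open>C \<noteq> {}\<close> nonempty_seq \<tau>(1)]
    by (rule eventually_conj)
  then show "\<forall>\<^sub>F j in sequentially. dist (metric_proj (Cs j) x) (metric_proj C x) < \<epsilon>"
  proof (rule eventually_mono, elim conjE)
    fix j
    assume near_C: "\<forall>y\<in>Cs j. norm y \<le> R \<longrightarrow> (\<exists>z\<in>C. dist y z < \<tau>)"
      and near_Cj: "\<forall>y\<in>C. norm y \<le> R \<longrightarrow> (\<exists>z\<in>Cs j. dist y z < \<tau>)"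
    define pj where "pj = metric_proj (Cs j) x"
    have "norm p \<le> R"
      using norm_triangle_ineq2[of p x] by (simp add: R_def \<rho>_def p_def norm_minus_commute)
    moreover have "p \<in> C" unfolding p_def by (rule metric_proj_in[OF assms])
    ultimately obtain q where "q \<in> Cs j" "dist p q < \<tau>"
      using near_Cj by blast
    then have "norm (x - pj) \<le> \<rho> + \<tau>"
      using norm_metric_proj_le[OF closed_seq convex_seq nonempty_seq, of q j x]
        norm_triangle_ineq[of "x - p" "p - q"]
      by (simp add: pj_def \<rho>_def p_def dist_norm)
    moreover have "norm pj \<le> norm x + norm (x - pj)"
      using norm_triangle_ineq2[of pj x] by (simp add: norm_minus_commute)
    ultimately have "norm pj \<le> R" using \<tau>(2) by (simp add: R_def)
    moreover have "pj \<in> Cs j" unfolding pj_def by (rule metric_proj_in[OF closed_seq convex_seq nonempty_seq])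
    ultimately obtain z where "z \<in> C" "dist pj z < \<tau>"
      using near_C by blast
    then have "norm (x - z) \<le> \<rho> + 2 * \<tau>"
      using \<open>norm (x - pj) \<le> \<rho> + \<tau>\<close> norm_triangle_ineq[of "x - pj" "pj - z"]
      by (simp add: dist_norm)
    then have "norm (z - p)^2 \<le> (2 * \<tau>) * (2 * \<rho> + 2 * \<tau>)"
      using metric_proj_near_minimizer[OF assms \<open>z \<in> C\<close>, of "2 * \<tau>" x] \<tau>(1)
      by (simp add: p_def \<rho>_def)
    also have "\<dots> = 4 * \<tau> * (\<rho> + \<tau>)" by (simp add: algebra_simps)
    also have "\<dots> \<le> 4 * \<tau> * (\<rho> + 1)" using \<tau>(1,2) by simp
    also have "\<dots> = \<tau> * (16 * (\<rho> + 1)) / 4" by simp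
    also have "\<dots> \<le> (\<epsilon>/2)^2" using \<tau>_small by (simp add: power_divide)
    finally have "dist z p \<le> \<epsilon>/2"
      unfolding dist_norm by (rule power2_le_imp_le) (use \<open>0 < \<epsilon>\<close> in simp)
    then have "dist pj p < \<epsilon>"
      using \<open>dist pj z < \<tau>\<close> \<tau>(3) dist_triangle[of pj p z] by linarith
    then show "dist (metric_proj (Cs j) x) (metric_proj C x) < \<epsilon>" by (simp add: pj_def p_def)
  qed
qed

lemma AW_converges_eventually_cball_subset:
  assumes "cball c r \<subseteq> C" "0 < r"
  shows "\<forall>\<^sub>F j in sequentially. cball c (r/2) \<subseteq> Cs j"
proof -
  have "C \<noteq> {}" using assms by auto
  have "\<forall>\<^sub>F j in sequentially. \<forall>w\<in>C. norm w \<le> norm c + r \<longrightarrow> (\<exists>z\<in>Cs j. dist w z < r/2)"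
    by (rule AW_converges_eventually_near_seq[OF AW \<open>C \<noteq> {}\<close> nonempty_seq]) (use \<open>0 < r\<close> in simp)
  then show ?thesis
  proof (rule eventually_mono)
    fix j
    assume near: "\<forall>w\<in>C. norm w \<le> norm c + r \<longrightarrow> (\<exists>z\<in>Cs j. dist w z < r/2)"
    show "cball c (r/2) \<subseteq> Cs j"
    proof
    fix y assume "y \<in> cball c (r/2)"
    show "y \<in> Cs j"
    proof (rule ccontr)
      assume "y \<notin> Cs j"
      define p where "p = metric_proj (Cs j) y"
      define u where "u = (1 / norm (y - p)) *\<^sub>R (y - p)"
      define w where "w = y + (r/2) *\<^sub>R u"
      have "p \<in> Cs j" unfolding p_def by (rule metric_proj_in[OF closed_seq convex_seq nonempty_seq])
      then have "0 < norm (y - p)" using \<open>y \<notin> Cs j\<close> by auto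
      then have u: "norm u = 1" "inner u (y - p) = norm (y - p)"
        by (simp_all add: u_def power2_norm_eq_inner[symmetric] power2_eq_square)
      have "dist c w \<le> dist c y + r/2"
        using dist_triangle[of c w y] \<open>0 < r\<close> u(1) by (simp add: w_def dist_norm)
      then have "w \<in> cball c r" using \<open>y \<in> cball c (r/2)\<close> by simp
      moreover have "norm w \<le> norm c + r"
        using \<open>w \<in> cball c r\<close> norm_triangle_ineq2[of w c] by (simp add: dist_norm norm_minus_commute)
      ultimately obtain z where "z \<in> Cs j" "dist w z < r/2" using near assms(1) by blast
      have "inner (y - p) (z - p) \<le> 0"
        unfolding p_def using \<open>z \<in> Cs j\<close>
        by (rule metric_proj_inner_le[OF closed_seq convex_seq nonempty_seq])
      then have "inner u (z - p) \<le> 0"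
        using \<open>0 < norm (y - p)\<close> by (simp add: u_def divide_nonpos_pos)
      moreover have "inner u (w - p) = norm (y - p) + r/2"
        using u by (simp add: w_def inner_add_right inner_diff_right algebra_simps
            power2_norm_eq_inner[symmetric])
      moreover have "inner u (w - z) \<le> norm (w - z)"
        using norm_cauchy_schwarz[of u "w - z"] u(1) by simp
      moreover have "inner u (w - p) = inner u (w - z) + inner u (z - p)"
        by (simp add: inner_diff_right)
      ultimately have "r/2 \<le> norm (w - z)"
        using \<open>0 < norm (y - p)\<close> by linarith
      then show False using \<open>dist w z < r/2\<close> by (simp add: dist_norm)
    qed
    qed
  qed
qed

end


lemma convex_ball_shrink_subset:
  fixes B :: "'a::real_normed_vector set"
  assumes "convex B" "p \<in> B" "ball q r \<subseteq> B" "0 < t" "t \<le> 1"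
  shows "ball ((1 - t) *\<^sub>R p + t *\<^sub>R q) (t * r) \<subseteq> B"
proof
  fix y assume y: "y \<in> ball ((1 - t) *\<^sub>R p + t *\<^sub>R q) (t * r)"
  define q' where "q' = q + (1 / t) *\<^sub>R (y - ((1 - t) *\<^sub>R p + t *\<^sub>R q))"
  have "dist q q' = dist ((1 - t) *\<^sub>R p + t *\<^sub>R q) y / t"
    using \<open>0 < t\<close> by (simp add: q'_def dist_norm norm_minus_commute)
  also have "\<dots> < r" using y \<open>0 < t\<close> by (simp add: divide_less_eq mult.commute)
  finally have "q' \<in> B" using assms(3) by auto
  moreover have "y = (1 - t) *\<^sub>R p + t *\<^sub>R q'"
    using \<open>0 < t\<close> by (simp add: q'_def algebra_simps)
  ultimately show "y \<in> B" using convexD[OF assms(1,2), of q' "1 - t" t] assms(4,5) by simp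
qed

lemma convex_interior_Int_common_cball:
  fixes A B :: "'a::real_normed_vector set"
  assumes "convex B" "interior B \<noteq> {}" "interior A \<inter> B \<noteq> {}"
  obtains c r where "0 < r" "cball c r \<subseteq> A" "cball c r \<subseteq> B"
proof -
  obtain p where "p \<in> interior A" "p \<in> B" using assms(3) by blast
  then obtain r0 where "0 < r0" "ball p r0 \<subseteq> A" using mem_interior by blast
  obtain q where "q \<in> interior B" using assms(2) by blast
  then obtain r1 where "0 < r1" "ball q r1 \<subseteq> B" using mem_interior by blast
  define t where "t = min 1 (r0 / (norm (q - p) + r1))"
  define c where "c = (1 - t) *\<^sub>R p + t *\<^sub>R q"
  have "0 < t" "t \<le> 1" using \<open>0 < r0\<close> \<open>0 < r1\<close> by (simp_all add: t_def add_nonneg_pos)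
  have "t * (norm (q - p) + r1) \<le> r0"
    using \<open>0 < r0\<close> \<open>0 < r1\<close> by (simp add: t_def min_def pos_le_divide_eq add_nonneg_pos)
  have cB: "ball c (t * r1) \<subseteq> B"
    unfolding c_def by (rule convex_ball_shrink_subset) fact+
  have "ball c (t * r1) \<subseteq> ball p r0"
  proof
    fix y assume "y \<in> ball c (t * r1)"
    moreover have "p - c = t *\<^sub>R (p - q)" by (simp add: c_def algebra_simps)
    then have "dist p c = t * norm (q - p)"
      using \<open>0 < t\<close> by (simp add: dist_norm norm_minus_commute)
    ultimately have "dist p y < t * norm (q - p) + t * r1"
      using dist_triangle[of p y c] by simp
    then show "y \<in> ball p r0" using \<open>t * (norm (q - p) + r1) \<le> r0\<close> by (simp add: algebra_simps)
  qed
  then have cA: "ball c (t * r1) \<subseteq> A" using \<open>ball p r0 \<subseteq> A\<close> by blast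
  have "cball c (t * r1 / 2) \<subseteq> ball c (t * r1)"
    using mult_pos_pos[OF \<open>0 < t\<close> \<open>0 < r1\<close>] by (auto simp: subset_eq)
  then show ?thesis
    using that[of "t * r1 / 2" c] cA cB \<open>0 < t\<close> \<open>0 < r1\<close> by simp
qed

lemma metric_proj_cball_decrease:
  fixes C :: "'a::{real_inner,complete_space} set"
  assumes "closed C" "convex C" "C \<noteq> {}" "cball c r \<subseteq> C" "0 \<le> r"
  shows "norm (metric_proj C x - c)^2 + 2 * r * norm (x - metric_proj C x) \<le> norm (x - c)^2"
proof -
  define p k where "p = metric_proj C x" and "k = norm (x - metric_proj C x)"
  have "r * k \<le> inner (x - p) (p - c)"
  proof (cases "k = 0")
    case True
    then show ?thesis by (simp add: k_def p_def)
  next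
    case False
    then have "0 < k" by (simp add: k_def)
    define z where "z = c + (r / k) *\<^sub>R (x - p)"
    have "dist c z = r" using \<open>0 < k\<close> \<open>0 \<le> r\<close> by (simp add: z_def dist_norm k_def p_def)
    then have "inner (x - p) (z - p) \<le> 0"
      unfolding p_def using assms(4) by (intro metric_proj_inner_le[OF assms(1-3)]) auto
    moreover have "inner (x - p) (z - p) = r * k - inner (x - p) (p - c)"
      using \<open>0 < k\<close> by (simp add: z_def inner_diff_right inner_add_right k_def p_def
          power2_norm_eq_inner[symmetric] power2_eq_square)
    ultimately show ?thesis by linarith
  qed
  moreover have "norm (x - c)^2 = k^2 + 2 * inner (x - p) (p - c) + norm (p - c)^2"
    using dot_norm[of "x - p" "p - c"] by (simp add: k_def p_def)
  ultimately show ?thesis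
    using zero_le_power2[of k] unfolding p_def k_def by linarith
qed

lemma convergent_if_summable_norm_diff:
  fixes x :: "nat \<Rightarrow> 'a::{real_normed_vector,complete_space}"
  assumes "summable (\<lambda>n. norm (x (Suc n) - x n))"
  shows "convergent x"
proof -
  have "Cauchy x"
  proof (rule metric_CauchyI)
    fix e :: real assume "0 < e"
    then obtain N where N: "\<And>m n. m \<ge> N \<Longrightarrow> norm (\<Sum>i=m..<n. norm (x (Suc i) - x i)) < e"
      using assms unfolding summable_Cauchy by blast
    have close: "dist (x n) (x m) < e" if "m \<ge> N" "m \<le> n" for m n
    proof -
      have "dist (x n) (x m) = norm (\<Sum>i=m..<n. x (Suc i) - x i)"
        using sum_Suc_diff'[OF \<open>m \<le> n\<close>, of x] by (simp add: dist_norm)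
      also have "\<dots> \<le> (\<Sum>i=m..<n. norm (x (Suc i) - x i))" by (rule norm_sum)
      also have "\<dots> < e" using N[OF \<open>m \<ge> N\<close>, of n] by (simp add: sum_nonneg)
      finally show ?thesis .
    qed
    show "\<exists>M. \<forall>m\<ge>M. \<forall>n\<ge>M. dist (x m) (x n) < e"
    proof (intro exI allI impI)
      fix m n assume "N \<le> m" "N \<le> n"
      then show "dist (x m) (x n) < e"
        using close[of m n] close[of n m] by (cases "m \<le> n") (simp_all add: dist_commute)
    qed
  qed
  then show ?thesis by (simp add: Cauchy_convergent_iff)
qed

lemma summable_if_descent:
  fixes \<phi> \<delta> :: "nat \<Rightarrow> real"
  assumes descent: "\<And>n. n \<ge> J \<Longrightarrow> \<phi> (Suc n) + \<delta> n \<le> \<phi> n"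
    and "\<And>n. 0 \<le> \<phi> n" "\<And>n. 0 \<le> \<delta> n"
  shows "summable \<delta>"
proof -
  have partial: "(\<Sum>i<k. \<delta> (i + J)) \<le> \<phi> J - \<phi> (k + J)" for k
  proof (induction k)
    case (Suc k)
    then show ?case using descent[of "k + J"] by simp
  qed simp
  have "summable (\<lambda>i. \<delta> (i + J))"
  proof (rule bounded_imp_summable)
    show "(\<Sum>i\<le>k. \<delta> (i + J)) \<le> \<phi> J" for k
      using partial[of "Suc k"] assms(2)[of "Suc k + J"] by (simp add: lessThan_Suc_atMost)
  qed (use assms(3) in simp)
  then show ?thesis by simp
qed

lemma alternating_projections_convergent_if_common_ball:
  fixes As Bs :: "nat \<Rightarrow> 'a::{real_inner,complete_space} set"
  assumes "\<And>n. closed (As n)" "\<And>n. convex (As n)" "\<And>n. As n \<noteq> {}"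
    and "\<And>n. closed (Bs n)" "\<And>n. convex (Bs n)" "\<And>n. Bs n \<noteq> {}"
    and balls: "\<forall>\<^sub>F n in sequentially. cball c r \<subseteq> As n \<and> cball c r \<subseteq> Bs n" and "0 < r"
    and b_step: "\<And>n. b (Suc n) = metric_proj (Bs (Suc n)) (a n)"
    and a_step: "\<And>n. a (Suc n) = metric_proj (As (Suc n)) (b (Suc n))"
  shows "convergent a \<and> convergent b"
proof -
  obtain J where J: "\<And>n. n \<ge> J \<Longrightarrow> cball c r \<subseteq> As n \<and> cball c r \<subseteq> Bs n"
    using balls unfolding eventually_sequentially by blast
  define \<delta> where "\<delta> n = norm (a n - b (Suc n)) + norm (b (Suc n) - a (Suc n))" for n
  have "norm (a (Suc n) - c)^2 + 2 * r * \<delta> n \<le> norm (a n - c)^2" if "n \<ge> J" for n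
  proof -
    have "cball c r \<subseteq> As (Suc n)" "cball c r \<subseteq> Bs (Suc n)" using J[of "Suc n"] that by auto
    then have "norm (b (Suc n) - c)^2 + 2 * r * norm (a n - b (Suc n)) \<le> norm (a n - c)^2"
      and "norm (a (Suc n) - c)^2 + 2 * r * norm (b (Suc n) - a (Suc n)) \<le> norm (b (Suc n) - c)^2"
      using \<open>0 < r\<close> unfolding b_step a_step
      by (simp_all add: metric_proj_cball_decrease assms(1-6))
    then show ?thesis by (simp add: \<delta>_def algebra_simps)
  qed
  then have "summable (\<lambda>n. 2 * r * \<delta> n)"
    using \<open>0 < r\<close> by (intro summable_if_descent[where \<phi> = "\<lambda>n. norm (a n - c)^2"]) (simp_all add: \<delta>_def)
  then have "summable \<delta>" using \<open>0 < r\<close> by (simp add: summable_cmult_iff mult.assoc)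
  have step_le: "norm (a (Suc n) - a n) \<le> \<delta> n" and gap_le: "norm (b (Suc n) - a n) \<le> \<delta> n" for n
    using norm_triangle_ineq[of "a (Suc n) - b (Suc n)" "b (Suc n) - a n"]
    by (simp_all add: \<delta>_def norm_minus_commute)
  have "summable (\<lambda>n. norm (a (Suc n) - a n))"
    by (rule summable_comparison_test'[OF \<open>summable \<delta>\<close>]) (use step_le in simp)
  then have "convergent a" by (rule convergent_if_summable_norm_diff)
  then obtain L where "a \<longlonglongrightarrow> L" unfolding convergent_def by blast
  have "(\<lambda>n. b (Suc n) - a n) \<longlonglongrightarrow> 0"
    using gap_le
    by (intro Lim_null_comparison[OF _ summable_LIMSEQ_zero[OF \<open>summable \<delta>\<close>]] always_eventually) simp
  then have "(\<lambda>n. (b (Suc n) - a n) + a n) \<longlonglongrightarrow> 0 + L" using \<open>a \<longlonglongrightarrow> L\<close> by (rule tendsto_add)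
  then have "(\<lambda>n. b (Suc n)) \<longlonglongrightarrow> L" by simp
  then have "convergent b" unfolding convergent_def by (blast intro: LIMSEQ_imp_Suc)
  with \<open>convergent a\<close> show ?thesis ..
qed


definition best_approx_well_posed :: "'a::real_normed_vector set \<Rightarrow> 'a set \<Rightarrow> 'a \<Rightarrow> bool" where
  "best_approx_well_posed A B e \<longleftrightarrow>
     (\<forall>\<epsilon>>0. \<exists>\<eta>>0. \<forall>a\<in>A. \<forall>b\<in>B. norm (a - b) < set_dist A B + \<eta> \<longrightarrow> norm (a - e) < \<epsilon>)"

lemma set_dist_le_norm:
  fixes A B :: "'a::real_normed_vector set"
  assumes "a \<in> A" "b \<in> B"
  shows "set_dist A B \<le> norm (a - b)"
proof -
  have "set_dist A B \<le> infdist a B"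
    unfolding set_dist_def by (rule cINF_lower[OF bdd_belowI[of _ 0] assms(1)]) (auto simp: infdist_nonneg)
  also have "\<dots> \<le> norm (a - b)" using infdist_le[OF assms(2)] by (simp add: dist_norm)
  finally show ?thesis .
qed

lemma ball_subset_dist_gap:
  fixes A B :: "'a::real_normed_vector set"
  assumes "interior A \<inter> B = {}" "ball m \<rho> \<subseteq> A" "0 < \<rho>" "b \<in> B"
  shows "\<rho> + set_dist A B \<le> norm (m - b)"
proof -
  define k where "k = norm (m - b)"
  have "m \<in> A" using assms(2,3) by auto
  have "ball m \<rho> \<subseteq> interior A" using assms(2) by (simp add: interior_maximal)
  then have "b \<notin> ball m \<rho>" using assms(1,4) by blast
  then have "\<rho> \<le> k" by (simp add: k_def dist_norm)
  have "t \<le> k - set_dist A B" if "t < \<rho>" for t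
  proof (cases "t \<le> 0")
    case True
    then show ?thesis using set_dist_le_norm[OF \<open>m \<in> A\<close> assms(4)] by (simp add: k_def)
  next
    case False
    define m' where "m' = m + (t / k) *\<^sub>R (b - m)"
    have "0 < k" using \<open>\<rho> \<le> k\<close> \<open>0 < \<rho>\<close> by simp
    then have "dist m m' = t" using False by (simp add: m'_def dist_norm k_def norm_minus_commute)
    then have "m' \<in> A" using assms(2) \<open>t < \<rho>\<close> by auto
    have "m' - b = (1 - t / k) *\<^sub>R (m - b)" by (simp add: m'_def algebra_simps)
    moreover have "0 \<le> 1 - t / k" using \<open>t < \<rho>\<close> \<open>\<rho> \<le> k\<close> \<open>0 < k\<close> by simp
    ultimately have "norm (m' - b) = (1 - t / k) * k" by (simp add: k_def)
    also have "\<dots> = k - t" using \<open>0 < k\<close> by (simp add: field_simps)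
    finally have "norm (m' - b) = k - t" .
    then show ?thesis using set_dist_le_norm[OF \<open>m' \<in> A\<close> assms(4)] by simp
  qed
  then have "\<rho> \<le> k - set_dist A B" by (rule dense_le)
  then show ?thesis by (simp add: k_def)
qed

lemma ball_subset_if_le_infdist_frontier:
  fixes A :: "'a::real_normed_vector set"
  assumes "m \<in> A" "\<delta> \<le> infdist m (frontier A)"
  shows "ball m \<delta> \<subseteq> A"
proof
  fix y assume "y \<in> ball m \<delta>"
  show "y \<in> A"
  proof (rule ccontr)
    assume "y \<notin> A"
    have "dist m y < \<delta>" using \<open>y \<in> ball m \<delta>\<close> by simp
    then have "0 < \<delta>" using zero_le_dist[of m y] by linarith
    then have "m \<in> ball m \<delta> \<inter> A" using \<open>m \<in> A\<close> by simp
    then have "ball m \<delta> \<inter> A \<noteq> {}" by blast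
    moreover have "ball m \<delta> - A \<noteq> {}" using \<open>y \<in> ball m \<delta>\<close> \<open>y \<notin> A\<close> by blast
    ultimately have "ball m \<delta> \<inter> frontier A \<noteq> {}"
      by (rule connected_Int_frontier[OF connected_ball])
    then obtain w where "w \<in> ball m \<delta>" "w \<in> frontier A" by blast
    then show False using infdist_le[of w "frontier A" m] assms(2) by simp
  qed
qed

lemma LUR_point_best_approx_well_posed:
  fixes A B :: "'a::real_normed_vector set"
  assumes "convex A" "convex B" "interior A \<inter> B = {}"
    and "LUR_point A e" "e \<in> A" "f \<in> B" "norm (e - f) = set_dist A B"
  shows "best_approx_well_posed A B e"
  unfolding best_approx_well_posed_def
proof (intro allI impI)
  fix \<epsilon> :: real assume "0 < \<epsilon>"
  then obtain \<delta> where "0 < \<delta>" and LUR: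
    "\<And>y. y \<in> A \<Longrightarrow> infdist ((1/2) *\<^sub>R (e + y)) (frontier A) < \<delta> \<Longrightarrow> norm (e - y) < \<epsilon>"
    using assms(4) unfolding LUR_point_def by blast
  have "norm (a - e) < \<epsilon>" if "a \<in> A" "b \<in> B" "norm (a - b) < set_dist A B + 2 * \<delta>" for a b
  proof -
    define m b' where "m = (1/2) *\<^sub>R (e + a)" and "b' = (1/2) *\<^sub>R (f + b)"
    have "m \<in> A" using convexD[OF assms(1) \<open>e \<in> A\<close> \<open>a \<in> A\<close>, of "1/2" "1/2"]
      by (simp add: m_def scaleR_right_distrib)
    have "b' \<in> B" using convexD[OF assms(2) \<open>f \<in> B\<close> \<open>b \<in> B\<close>, of "1/2" "1/2"]
      by (simp add: b'_def scaleR_right_distrib)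
    have "m - b' = (1/2) *\<^sub>R ((e - f) + (a - b))" by (simp add: m_def b'_def algebra_simps)
    then have "2 * norm (m - b') \<le> norm (e - f) + norm (a - b)"
      using norm_triangle_ineq[of "e - f" "a - b"] by simp
    then have "norm (m - b') < set_dist A B + \<delta>" using assms(7) that(3) by linarith
    moreover have "\<not> \<delta> \<le> infdist m (frontier A)"
    proof
      assume "\<delta> \<le> infdist m (frontier A)"
      then have "ball m \<delta> \<subseteq> A" by (rule ball_subset_if_le_infdist_frontier[OF \<open>m \<in> A\<close>])
      then have "\<delta> + set_dist A B \<le> norm (m - b')"
        by (rule ball_subset_dist_gap[OF assms(3) _ \<open>0 < \<delta>\<close> \<open>b' \<in> B\<close>])
      then show False using calculation by linarith
    qed
    ultimately show ?thesis using LUR[OF \<open>a \<in> A\<close>] by (simp add: m_def norm_minus_commute)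
  qed
  then show "\<exists>\<eta>>0. \<forall>a\<in>A. \<forall>b\<in>B. norm (a - b) < set_dist A B + \<eta> \<longrightarrow> norm (a - e) < \<epsilon>"
  proof (intro exI conjI ballI impI)
    show "0 < 2 * \<delta>" using \<open>0 < \<delta>\<close> by simp
  qed
qed

context
  fixes A B :: "'a::{real_inner,complete_space} set"
  assumes closed_B: "closed B" and convex_B: "convex B" and nonempty_B: "B \<noteq> {}"
begin

lemma norm_metric_proj_best_A:
  assumes "e \<in> best_A A B"
  shows "norm (e - metric_proj B e) = set_dist A B"
  using assms norm_metric_proj_eq_infdist[OF closed_B convex_B nonempty_B] by (simp add: best_A_def)

lemma metric_proj_metric_proj_best_A:
  assumes "closed A" "convex A" "e \<in> best_A A B"
  shows "metric_proj A (metric_proj B e) = e"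
proof -
  define f p where "f = metric_proj B e" and "p = metric_proj A f"
  have "e \<in> A" "A \<noteq> {}" using assms(3) by (auto simp: best_A_def)
  have "norm (e - p)^2 + norm (f - p)^2 \<le> norm (f - e)^2"
    unfolding p_def by (rule metric_proj_pythagorean[OF assms(1,2) \<open>A \<noteq> {}\<close> \<open>e \<in> A\<close>])
  moreover have "norm (f - e) = set_dist A B"
    using norm_metric_proj_best_A[OF assms(3)] by (simp add: f_def norm_minus_commute)
  moreover have "set_dist A B \<le> norm (f - p)"
    using set_dist_le_norm[of p A f B] metric_proj_in[OF assms(1,2) \<open>A \<noteq> {}\<close>]
      metric_proj_in[OF closed_B convex_B nonempty_B]
    by (simp add: p_def f_def norm_minus_commute)
  ultimately have "norm (f - e) \<le> norm (f - p)" by linarith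
  then have "norm (f - e)^2 \<le> norm (f - p)^2" by (simp add: power_mono)
  with \<open>norm (e - p)^2 + norm (f - p)^2 \<le> norm (f - e)^2\<close> have "norm (e - p)^2 \<le> 0" by linarith
  then show ?thesis by (simp add: p_def f_def)
qed

lemma best_A_in_frontier:
  assumes "closed A" "interior A \<inter> B = {}" "e \<in> best_A A B"
  shows "e \<in> frontier A"
proof -
  have "e \<in> A" using assms(3) by (simp add: best_A_def)
  moreover have "e \<notin> interior A"
  proof
    assume "e \<in> interior A"
    then obtain \<rho> where "0 < \<rho>" "ball e \<rho> \<subseteq> A" using mem_interior by blast
    then have "\<rho> + set_dist A B \<le> norm (e - metric_proj B e)"
      using ball_subset_dist_gap[OF assms(2)] metric_proj_in[OF closed_B convex_B nonempty_B] by blast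
    then show False using norm_metric_proj_best_A[OF assms(3)] \<open>0 < \<rho>\<close> by simp
  qed
  ultimately show ?thesis using assms(1) by (simp add: frontier_def)
qed

end


lemma sq_growth_arith:
  fixes s X Y \<epsilon> c r :: real
  assumes "0 < r" "r \<le> s" "0 \<le> \<epsilon>" "\<epsilon> \<le> r" "\<epsilon> \<le> c^2 * r / 4"
    and "s \<le> Y + \<epsilon>" "c * s \<le> X" "0 \<le> c"
  shows "s^2 * (1 + c^2/2) \<le> Y^2 + X^2"
proof -
  have "(c * s)^2 \<le> X^2" using assms by (intro power_mono) auto
  then have X: "c^2 * s^2 \<le> X^2" by (simp add: power_mult_distrib)
  have "(s - \<epsilon>)^2 \<le> Y^2" using assms by (intro power_mono) auto
  moreover have "(s - \<epsilon>)^2 = s^2 - 2 * (\<epsilon> * s) + \<epsilon>^2" by (simp add: power2_diff algebra_simps)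
  ultimately have Y: "s^2 - 2 * (\<epsilon> * s) \<le> Y^2" using zero_le_power2[of \<epsilon>] by linarith
  have "2 * \<epsilon> * s \<le> (c^2 * r / 2) * s" by (rule mult_right_mono) (use assms in auto)
  also have "\<dots> = (c^2 / 2) * (r * s)" by simp
  also have "\<dots> \<le> (c^2 / 2) * (s * s)" using assms(1,2) by (intro mult_left_mono mult_right_mono) auto
  also have "\<dots> = (c^2 / 2) * s^2" by (simp add: power2_eq_square)
  finally have "2 * (\<epsilon> * s) \<le> c^2 * s^2 / 2" by simp
  moreover have "s^2 * (1 + c^2/2) = s^2 + c^2 * s^2 / 2" by (simp add: algebra_simps)
  ultimately show ?thesis using X Y by linarith
qed

lemma eventually_le_if_eventually_contracting:
  fixes u :: "nat \<Rightarrow> real"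
  assumes "\<forall>\<^sub>F k in sequentially. u (Suc k) \<le> max R (u k / q)" "1 < q" "0 < R"
  shows "\<forall>\<^sub>F k in sequentially. u k \<le> R"
proof -
  obtain N where N: "\<And>k. k \<ge> N \<Longrightarrow> u (Suc k) \<le> max R (u k / q)"
    using assms(1) unfolding eventually_sequentially by blast
  have "R / q \<le> R" using assms(2,3) by (simp add: divide_le_eq)
  have bound: "u (k + N) \<le> max R (u N / q^k)" for k
  proof (induction k)
    case (Suc k)
    have "u (k + N) / q \<le> max R (u N / q^k) / q"
      using Suc.IH assms(2) by (simp add: divide_right_mono)
    then have "max R (u (k + N) / q) \<le> max R (max R (u N / q^k) / q)"
      by (rule max.mono[OF order_refl])
    also have "max R (u N / q^k) / q = max (R / q) (u N / q^Suc k)"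
      using assms(2) by (simp add: max_divide_distrib_right mult.commute)
    also have "max R (max (R / q) (u N / q^Suc k)) \<le> max R (u N / q^Suc k)"
      using \<open>R / q \<le> R\<close> by simp
    finally show ?case using N[of "k + N"] by simp
  qed simp
  have "\<forall>\<^sub>F k in sequentially. u N / q^k < R"
    using LIMSEQ_divide_realpow_zero[OF assms(2), of "u N"] assms(3) by (rule order_tendstoD(2))
  then have "\<forall>\<^sub>F k in sequentially. u (k + N) \<le> R"
  proof (rule eventually_mono)
    fix k assume "u N / q^k < R"
    then show "u (k + N) \<le> R" using bound[of k] by simp
  qed
  then show ?thesis using eventually_sequentially_seg[of "\<lambda>k. u k \<le> R" N] by simp
qed

lemma convex_pair_toward_anchor:
  fixes A' B' :: "'a::real_normed_vector set"
  assumes "convex A'" "convex B'" "\<rho> \<in> A'" "g \<in> B'" "x \<in> A'" "y \<in> B'"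
    and "0 < r" "0 < \<eta>" "norm (\<rho> - e) < r/4" "r \<le> norm (x - e)"
    and "norm ((y - x) - v) < \<eta> / (2 * r) * norm (x - e)"
  obtains a b where "a \<in> A'" "b \<in> B'" "r/4 \<le> norm (a - e)" "norm (a - e) \<le> 3/4 * r"
    "norm ((b - a) - v) < norm ((g - \<rho>) - v) + \<eta>/3"
proof -
  define s D where "s = norm (x - e)" and "D = norm (x - \<rho>)"
  define t where "t = r / (2 * D)"
  have "s \<le> D + norm (\<rho> - e)"
    using norm_triangle_ineq[of "x - \<rho>" "\<rho> - e"] by (simp add: s_def D_def)
  then have "3 * s \<le> 4 * D" using assms(9,10) by (simp add: s_def)
  then have "0 < D" "3 * r \<le> 4 * D" using assms(7,10) by (simp_all add: s_def)
  then have "0 < t" "t \<le> 1" "t * D = r / 2" using assms(7) by (simp_all add: t_def field_simps)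
  have "t * (3 * s) \<le> t * (4 * D)" using \<open>3 * s \<le> 4 * D\<close> \<open>0 < t\<close> by simp
  then have ts: "t * s \<le> 2/3 * r" using \<open>t * D = r / 2\<close> by simp
  define a b where "a = (1 - t) *\<^sub>R \<rho> + t *\<^sub>R x" and "b = (1 - t) *\<^sub>R g + t *\<^sub>R y"
  have "a \<in> A'" using convexD_alt[OF assms(1,3,5)] \<open>0 < t\<close> \<open>t \<le> 1\<close> by (simp add: a_def)
  have "b \<in> B'" using convexD_alt[OF assms(2,4,6)] \<open>0 < t\<close> \<open>t \<le> 1\<close> by (simp add: b_def)
  have "a - \<rho> = t *\<^sub>R (x - \<rho>)" by (simp add: a_def algebra_simps)
  then have "norm (a - \<rho>) = r / 2" using \<open>0 < t\<close> \<open>t * D = r / 2\<close> by (simp add: D_def)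
  then have "r/4 \<le> norm (a - e)" "norm (a - e) \<le> 3/4 * r"
    using norm_triangle_ineq[of "a - e" "e - \<rho>"] norm_triangle_ineq[of "a - \<rho>" "\<rho> - e"] assms(9)
    by (simp_all add: norm_minus_commute)
  have "(b - a) - v = (1 - t) *\<^sub>R ((g - \<rho>) - v) + t *\<^sub>R ((y - x) - v)"
    by (simp add: a_def b_def algebra_simps)
  then have "norm ((b - a) - v) \<le> (1 - t) * norm ((g - \<rho>) - v) + t * norm ((y - x) - v)"
    using norm_triangle_ineq[of "(1 - t) *\<^sub>R ((g - \<rho>) - v)" "t *\<^sub>R ((y - x) - v)"]
      \<open>0 < t\<close> \<open>t \<le> 1\<close> by simp
  also have "\<dots> \<le> norm ((g - \<rho>) - v) + t * norm ((y - x) - v)"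
    using \<open>0 < t\<close> \<open>t \<le> 1\<close> by (simp add: mult_left_le_one_le)
  also have "t * norm ((y - x) - v) < t * (\<eta> / (2 * r) * s)"
    unfolding s_def by (rule mult_strict_left_mono[OF assms(11) \<open>0 < t\<close>])
  also have "\<dots> = \<eta> / (2 * r) * (t * s)" by simp
  also have "\<dots> \<le> \<eta> / (2 * r) * (2/3 * r)" using ts assms(7,8) by (intro mult_left_mono) auto
  also have "\<dots> = \<eta> / 3" using assms(7) by simp
  finally show ?thesis
    using that \<open>a \<in> A'\<close> \<open>b \<in> B'\<close> \<open>r/4 \<le> norm (a - e)\<close> \<open>norm (a - e) \<le> 3/4 * r\<close> by simp
qed


lemma metric_proj_comp_contraction:
  fixes A' B' :: "'a::{real_inner,complete_space} set"
  assumes A': "closed A'" "convex A'" "A' \<noteq> {}" and B': "closed B'" "convex B'" "B' \<noteq> {}"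
    and gap: "\<And>x y. x \<in> A' \<Longrightarrow> y \<in> B' \<Longrightarrow> r \<le> norm (x - e) \<Longrightarrow> c * norm (x - e) \<le> norm ((y - x) - v)"
    and "0 < r" "0 \<le> c"
    and anchor_gap: "norm ((metric_proj B' e - metric_proj A' (metric_proj B' e)) - v) \<le> c * r / 2"
    and anchor_near: "norm (metric_proj A' (metric_proj B' e) - e) \<le> min r (c^2 * r / 16)"
  shows "norm (metric_proj A' (metric_proj B' u) - e)^2 \<le> max (r^2) (norm (u - e)^2 / (1 + c^2/8))"
proof -
  define x a g \<rho> where "x = metric_proj B' u" and "a = metric_proj A' x"
    and "g = metric_proj B' e" and "\<rho> = metric_proj A' g"
  define s p where "s = norm (a - e)" and "p = norm (u - e)"
  show ?thesis
  proof (cases "s < r")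
    case True
    then have "s^2 \<le> r^2" by (intro power_mono) (simp_all add: s_def)
    then show ?thesis by (simp add: s_def a_def x_def)
  next
    case False
    define X Y where "X = norm ((x - a) - (g - \<rho>))" and "Y = norm (a - \<rho>)"
    have "Y^2 + X^2 \<le> norm (x - g)^2"
      unfolding X_def Y_def a_def \<rho>_def by (rule metric_proj_firmly_nonexpansive[OF A'])
    also have "\<dots> \<le> p^2"
      unfolding x_def g_def p_def by (intro power_mono metric_proj_nonexpansive[OF B']) simp
    finally have "Y^2 + X^2 \<le> p^2" .
    have "c * s \<le> norm ((x - a) - v)"
      unfolding s_def using False
      by (intro gap) (simp_all add: s_def a_def x_def metric_proj_in[OF A'] metric_proj_in[OF B'])
    also have "\<dots> \<le> X + norm ((g - \<rho>) - v)"
      using norm_triangle_ineq[of "(x - a) - (g - \<rho>)" "(g - \<rho>) - v"] by (simp add: X_def)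
    finally have "c * s \<le> X + c * r / 2" using anchor_gap by (simp add: g_def \<rho>_def)
    moreover have "c * r \<le> c * s" using False \<open>0 \<le> c\<close> by (simp add: mult_left_mono)
    ultimately have "(c/2) * s \<le> X" by simp
    have "s \<le> Y + norm (\<rho> - e)"
      using norm_triangle_ineq[of "a - \<rho>" "\<rho> - e"] by (simp add: s_def Y_def)
    then have "s^2 * (1 + (c/2)^2/2) \<le> Y^2 + X^2"
      using sq_growth_arith[of r s "norm (\<rho> - e)" "c/2" Y X] False \<open>0 < r\<close> \<open>0 \<le> c\<close>
        \<open>(c/2) * s \<le> X\<close> anchor_near
      by (simp add: g_def \<rho>_def power_divide)
    then have "s^2 * (1 + c^2/8) \<le> p^2"
      using \<open>Y^2 + X^2 \<le> p^2\<close> by (simp add: power_divide)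
    then have "s^2 \<le> p^2 / (1 + c^2/8)" by (simp add: pos_le_divide_eq add_pos_nonneg)
    then show ?thesis by (simp add: s_def p_def a_def x_def)
  qed
qed

context
  fixes A B :: "'a::{real_inner,complete_space} set" and As Bs :: "nat \<Rightarrow> 'a set"
  assumes closed_A: "closed A" and convex_A: "convex A" and nonempty_A: "A \<noteq> {}"
    and closed_B: "closed B" and convex_B: "convex B" and nonempty_B: "B \<noteq> {}"
    and closed_As: "\<And>n. closed (As n)" and convex_As: "\<And>n. convex (As n)"
    and nonempty_As: "\<And>n. As n \<noteq> {}"
    and closed_Bs: "\<And>n. closed (Bs n)" and convex_Bs: "\<And>n. convex (Bs n)"
    and nonempty_Bs: "\<And>n. Bs n \<noteq> {}"
    and AW_A: "AW_converges As A" and AW_B: "AW_converges Bs B"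
begin

lemma perturbed_well_posed:
  assumes "best_approx_well_posed A B e" "0 < \<epsilon>"
  obtains \<eta> where "0 < \<eta>" "\<forall>\<^sub>F n in sequentially. \<forall>a\<in>As n. \<forall>b\<in>Bs n.
      norm a \<le> R \<longrightarrow> norm (a - b) < set_dist A B + \<eta> \<longrightarrow> norm (a - e) < \<epsilon>"
proof -
  obtain \<eta>0 where "0 < \<eta>0" and wp:
    "\<And>a b. a \<in> A \<Longrightarrow> b \<in> B \<Longrightarrow> norm (a - b) < set_dist A B + \<eta>0 \<Longrightarrow> norm (a - e) < \<epsilon>/2"
    using assms unfolding best_approx_well_posed_def by (meson half_gt_zero)
  define \<eta> \<tau> where "\<eta> = min 1 (\<eta>0/3)" and "\<tau> = min (\<epsilon>/2) (\<eta>0/3)"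
  have "0 < \<eta>" "0 < \<tau>" using \<open>0 < \<eta>0\<close> \<open>0 < \<epsilon>\<close> by (simp_all add: \<eta>_def \<tau>_def)
  have "\<eta> \<le> 1" "\<eta> \<le> \<eta>0/3" unfolding \<eta>_def by (rule min.cobounded1, rule min.cobounded2)
  have "\<tau> \<le> \<epsilon>/2" "\<tau> \<le> \<eta>0/3" unfolding \<tau>_def by (rule min.cobounded1, rule min.cobounded2)
  have "\<forall>\<^sub>F n in sequentially. (\<forall>a\<in>As n. norm a \<le> R \<longrightarrow> (\<exists>a'\<in>A. dist a a' < \<tau>))
      \<and> (\<forall>b\<in>Bs n. norm b \<le> R + set_dist A B + 1 \<longrightarrow> (\<exists>b'\<in>B. dist b b' < \<tau>))"
    using AW_converges_eventually_near_limit[OF AW_A nonempty_A nonempty_As \<open>0 < \<tau>\<close>]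
      AW_converges_eventually_near_limit[OF AW_B nonempty_B nonempty_Bs \<open>0 < \<tau>\<close>]
    by (rule eventually_conj)
  then have "\<forall>\<^sub>F n in sequentially. \<forall>a\<in>As n. \<forall>b\<in>Bs n.
      norm a \<le> R \<longrightarrow> norm (a - b) < set_dist A B + \<eta> \<longrightarrow> norm (a - e) < \<epsilon>"
  proof (rule eventually_mono)
    fix n
    assume near: "(\<forall>a\<in>As n. norm a \<le> R \<longrightarrow> (\<exists>a'\<in>A. dist a a' < \<tau>))
      \<and> (\<forall>b\<in>Bs n. norm b \<le> R + set_dist A B + 1 \<longrightarrow> (\<exists>b'\<in>B. dist b b' < \<tau>))"
    show "\<forall>a\<in>As n. \<forall>b\<in>Bs n. norm a \<le> R \<longrightarrow> norm (a - b) < set_dist A B + \<eta> \<longrightarrow> norm (a - e) < \<epsilon>"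
    proof (intro ballI impI)
      fix a b assume "a \<in> As n" "b \<in> Bs n" "norm a \<le> R" and ab: "norm (a - b) < set_dist A B + \<eta>"
      obtain a' where "a' \<in> A" "dist a a' < \<tau>" using near \<open>a \<in> As n\<close> \<open>norm a \<le> R\<close> by blast
      have "norm b \<le> norm a + norm (a - b)" using norm_triangle_ineq4[of a "a - b"] by simp
      then have "norm b \<le> R + set_dist A B + 1" using \<open>norm a \<le> R\<close> ab \<open>\<eta> \<le> 1\<close> by simp
      then obtain b' where "b' \<in> B" "dist b b' < \<tau>" using near \<open>b \<in> Bs n\<close> by blast
      have "norm (a' - b') \<le> dist a' a + norm (a - b) + dist b b'"
        using dist_triangle[of a' b' a] dist_triangle[of a b' b] by (simp add: dist_norm)
      also have "\<dots> < set_dist A B + \<eta>0"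
        using \<open>dist a a' < \<tau>\<close> \<open>dist b b' < \<tau>\<close> ab \<open>\<eta> \<le> \<eta>0/3\<close> \<open>\<tau> \<le> \<eta>0/3\<close>
        by (simp add: dist_commute)
      finally have "norm (a' - e) < \<epsilon>/2" by (rule wp[OF \<open>a' \<in> A\<close> \<open>b' \<in> B\<close>])
      moreover have "norm (a - e) \<le> dist a a' + norm (a' - e)"
        using norm_triangle_ineq[of "a - a'" "a' - e"] by (simp add: dist_norm)
      ultimately show "norm (a - e) < \<epsilon>" using \<open>dist a a' < \<tau>\<close> \<open>\<tau> \<le> \<epsilon>/2\<close> by simp
    qed
  qed
  with \<open>0 < \<eta>\<close> show ?thesis using that by blast
qed

lemma perturbed_gap_estimate:
  assumes wp: "best_approx_well_posed A B e" and "norm v = set_dist A B"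
    and \<rho>_in: "\<And>n. \<rho> n \<in> As n" and g_in: "\<And>n. g n \<in> Bs n"
    and "\<rho> \<longlonglongrightarrow> e" "(\<lambda>n. g n - \<rho> n) \<longlonglongrightarrow> v" "0 < r"
  obtains c where "0 < c" "\<forall>\<^sub>F n in sequentially. \<forall>x\<in>As n. \<forall>y\<in>Bs n.
      r \<le> norm (x - e) \<longrightarrow> c * norm (x - e) \<le> norm ((y - x) - v)"
proof -
  obtain \<eta> where "0 < \<eta>" and "\<forall>\<^sub>F n in sequentially. \<forall>a\<in>As n. \<forall>b\<in>Bs n.
      norm a \<le> norm e + r \<longrightarrow> norm (a - b) < set_dist A B + \<eta> \<longrightarrow> norm (a - e) < r/4"
    using perturbed_well_posed[OF wp, of "r/4"] \<open>0 < r\<close> by auto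
  moreover have "\<forall>\<^sub>F n in sequentially. norm (\<rho> n - e) < r/4"
    using tendstoD[OF \<open>\<rho> \<longlonglongrightarrow> e\<close>, of "r/4"] \<open>0 < r\<close> by (simp add: dist_norm)
  moreover have "\<forall>\<^sub>F n in sequentially. norm ((g n - \<rho> n) - v) < \<eta>/4"
    using tendstoD[OF \<open>(\<lambda>n. g n - \<rho> n) \<longlonglongrightarrow> v\<close>, of "\<eta>/4"] \<open>0 < \<eta>\<close> by (simp add: dist_norm)
  ultimately have "\<forall>\<^sub>F n in sequentially. (\<forall>a\<in>As n. \<forall>b\<in>Bs n.
      norm a \<le> norm e + r \<longrightarrow> norm (a - b) < set_dist A B + \<eta> \<longrightarrow> norm (a - e) < r/4)
      \<and> norm (\<rho> n - e) < r/4 \<and> norm ((g n - \<rho> n) - v) < \<eta>/4"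
    by (intro eventually_conj)
  then have "\<forall>\<^sub>F n in sequentially. \<forall>x\<in>As n. \<forall>y\<in>Bs n.
      r \<le> norm (x - e) \<longrightarrow> \<eta> / (2 * r) * norm (x - e) \<le> norm ((y - x) - v)"
  proof (rule eventually_mono)
    fix n
    assume elim: "(\<forall>a\<in>As n. \<forall>b\<in>Bs n.
      norm a \<le> norm e + r \<longrightarrow> norm (a - b) < set_dist A B + \<eta> \<longrightarrow> norm (a - e) < r/4)
      \<and> norm (\<rho> n - e) < r/4 \<and> norm ((g n - \<rho> n) - v) < \<eta>/4"
    then have wp_n: "\<And>a b. a \<in> As n \<Longrightarrow> b \<in> Bs n \<Longrightarrow> norm a \<le> norm e + r
        \<Longrightarrow> norm (a - b) < set_dist A B + \<eta> \<Longrightarrow> norm (a - e) < r/4"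
      and "norm (\<rho> n - e) < r/4" "norm ((g n - \<rho> n) - v) < \<eta>/4" by auto
    show "\<forall>x\<in>As n. \<forall>y\<in>Bs n. r \<le> norm (x - e) \<longrightarrow> \<eta> / (2 * r) * norm (x - e) \<le> norm ((y - x) - v)"
    proof (intro ballI impI)
      fix x y assume "x \<in> As n" "y \<in> Bs n" "r \<le> norm (x - e)"
      show "\<eta> / (2 * r) * norm (x - e) \<le> norm ((y - x) - v)"
      proof (rule ccontr)
        assume "\<not> ?thesis"
        then have "norm ((y - x) - v) < \<eta> / (2 * r) * norm (x - e)" by simp
        then obtain a b where "a \<in> As n" "b \<in> Bs n" "r/4 \<le> norm (a - e)" "norm (a - e) \<le> 3/4 * r"
          and ba: "norm ((b - a) - v) < norm ((g n - \<rho> n) - v) + \<eta>/3"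
          by (rule convex_pair_toward_anchor[OF convex_As convex_Bs \<rho>_in g_in \<open>x \<in> As n\<close> \<open>y \<in> Bs n\<close>
              \<open>0 < r\<close> \<open>0 < \<eta>\<close> \<open>norm (\<rho> n - e) < r/4\<close> \<open>r \<le> norm (x - e)\<close>])
        have "norm (b - a) \<le> norm v + norm ((b - a) - v)" using norm_triangle_sub[of "b - a" v] by simp
        then have "norm (a - b) < set_dist A B + \<eta>"
          using ba \<open>norm ((g n - \<rho> n) - v) < \<eta>/4\<close> \<open>norm v = set_dist A B\<close> \<open>0 < \<eta>\<close>
          by (simp add: norm_minus_commute)
        moreover have "norm a \<le> norm e + r"
          using norm_triangle_sub[of a e] \<open>norm (a - e) \<le> 3/4 * r\<close> \<open>0 < r\<close> by simp
        ultimately have "norm (a - e) < r/4" by (rule wp_n[OF \<open>a \<in> As n\<close> \<open>b \<in> Bs n\<close>, rotated])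
        then show False using \<open>r/4 \<le> norm (a - e)\<close> by simp
      qed
    qed
  qed
  then show ?thesis using that[of "\<eta> / (2 * r)"] \<open>0 < \<eta>\<close> \<open>0 < r\<close> by simp
qed

lemma perturbed_anchors_tendsto:
  assumes "metric_proj A (metric_proj B e) = e"
  shows "(\<lambda>n. metric_proj (Bs n) e) \<longlonglongrightarrow> metric_proj B e"
    and "(\<lambda>n. metric_proj (As n) (metric_proj (Bs n) e)) \<longlonglongrightarrow> e"
proof -
  define f where "f = metric_proj B e"
  show g_lim: "(\<lambda>n. metric_proj (Bs n) e) \<longlonglongrightarrow> f"
    unfolding f_def
    by (rule metric_proj_AW_tendsto[OF AW_B closed_Bs convex_Bs nonempty_Bs closed_B convex_B nonempty_B])
  have "(\<lambda>n. metric_proj (As n) f) \<longlonglongrightarrow> e"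
    using metric_proj_AW_tendsto[OF AW_A closed_As convex_As nonempty_As closed_A convex_A nonempty_A, of f]
      assms by (simp add: f_def)
  moreover have "(\<lambda>n. metric_proj (As n) (metric_proj (Bs n) e) - metric_proj (As n) f) \<longlonglongrightarrow> 0"
  proof (rule Lim_null_comparison)
    show "\<forall>\<^sub>F n in sequentially.
        norm (metric_proj (As n) (metric_proj (Bs n) e) - metric_proj (As n) f)
          \<le> norm (metric_proj (Bs n) e - f)"
      by (intro always_eventually allI metric_proj_nonexpansive[OF closed_As convex_As nonempty_As])
    show "(\<lambda>n. norm (metric_proj (Bs n) e - f)) \<longlonglongrightarrow> 0"
      using g_lim by (simp add: tendsto_norm_zero LIM_zero)
  qed
  ultimately have "(\<lambda>n. (metric_proj (As n) (metric_proj (Bs n) e) - metric_proj (As n) f)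
      + metric_proj (As n) f) \<longlonglongrightarrow> 0 + e" by (intro tendsto_add)
  then show "(\<lambda>n. metric_proj (As n) (metric_proj (Bs n) e)) \<longlonglongrightarrow> e" by simp
qed

context
  fixes e :: 'a and a b :: "nat \<Rightarrow> 'a"
  assumes wp: "best_approx_well_posed A B e"
    and e_dist: "norm (e - metric_proj B e) = set_dist A B"
    and e_fixed: "metric_proj A (metric_proj B e) = e"
    and b_step: "\<And>n. b (Suc n) = metric_proj (Bs (Suc n)) (a n)"
    and a_step: "\<And>n. a (Suc n) = metric_proj (As (Suc n)) (b (Suc n))"
begin

lemma perturbed_iterates_eventually_near:
  assumes "0 < r"
  shows "\<forall>\<^sub>F n in sequentially. norm (a n - e) \<le> r"
proof -
  define v where "v = metric_proj B e - e"
  define g \<rho> where "g n = metric_proj (Bs n) e" and "\<rho> n = metric_proj (As n) (g n)" for n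
  have "g \<longlonglongrightarrow> metric_proj B e"
    unfolding g_def[abs_def] by (rule perturbed_anchors_tendsto(1)[OF e_fixed])
  moreover have "\<rho> \<longlonglongrightarrow> e"
    unfolding \<rho>_def[abs_def] g_def by (rule perturbed_anchors_tendsto(2)[OF e_fixed])
  ultimately have gap_lim: "(\<lambda>n. g n - \<rho> n) \<longlonglongrightarrow> v" unfolding v_def by (rule tendsto_diff)
  have "norm v = set_dist A B" using e_dist by (simp add: v_def norm_minus_commute)
  have "\<rho> n \<in> As n" "g n \<in> Bs n" for n
    unfolding \<rho>_def g_def
    by (rule metric_proj_in[OF closed_As convex_As nonempty_As], rule metric_proj_in[OF closed_Bs convex_Bs nonempty_Bs])
  then obtain c where "0 < c" and gap: "\<forall>\<^sub>F n in sequentially. \<forall>x\<in>As n. \<forall>y\<in>Bs n.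
      r \<le> norm (x - e) \<longrightarrow> c * norm (x - e) \<le> norm ((y - x) - v)"
    using perturbed_gap_estimate[OF wp \<open>norm v = set_dist A B\<close> _ _ \<open>\<rho> \<longlonglongrightarrow> e\<close> gap_lim \<open>0 < r\<close>]
    by blast
  have "\<forall>\<^sub>F n in sequentially. norm ((g n - \<rho> n) - v) < c * r / 2"
    using tendstoD[OF gap_lim, of "c * r / 2"] \<open>0 < c\<close> \<open>0 < r\<close> by (simp add: dist_norm)
  moreover have "\<forall>\<^sub>F n in sequentially. norm (\<rho> n - e) < min r (c^2 * r / 16)"
    using tendstoD[OF \<open>\<rho> \<longlonglongrightarrow> e\<close>, of "min r (c^2 * r / 16)"] \<open>0 < c\<close> \<open>0 < r\<close>
    by (simp add: dist_norm)
  ultimately have "\<forall>\<^sub>F n in sequentially. (\<forall>x\<in>As n. \<forall>y\<in>Bs n.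
      r \<le> norm (x - e) \<longrightarrow> c * norm (x - e) \<le> norm ((y - x) - v))
      \<and> norm ((g n - \<rho> n) - v) < c * r / 2 \<and> norm (\<rho> n - e) < min r (c^2 * r / 16)"
    using gap by (intro eventually_conj)
  then have "\<forall>\<^sub>F n in sequentially. (\<forall>x\<in>As (Suc n). \<forall>y\<in>Bs (Suc n).
      r \<le> norm (x - e) \<longrightarrow> c * norm (x - e) \<le> norm ((y - x) - v))
      \<and> norm ((g (Suc n) - \<rho> (Suc n)) - v) < c * r / 2 \<and> norm (\<rho> (Suc n) - e) < min r (c^2 * r / 16)"
    by (rule eventually_sequentially_Suc[THEN iffD2])
  then have "\<forall>\<^sub>F n in sequentially. norm (a (Suc n) - e)^2 \<le> max (r^2) (norm (a n - e)^2 / (1 + c^2/8))"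
  proof (rule eventually_mono)
    fix n assume H: "(\<forall>x\<in>As (Suc n). \<forall>y\<in>Bs (Suc n).
      r \<le> norm (x - e) \<longrightarrow> c * norm (x - e) \<le> norm ((y - x) - v))
      \<and> norm ((g (Suc n) - \<rho> (Suc n)) - v) < c * r / 2 \<and> norm (\<rho> (Suc n) - e) < min r (c^2 * r / 16)"
    then have gap_n: "\<And>x y. x \<in> As (Suc n) \<Longrightarrow> y \<in> Bs (Suc n) \<Longrightarrow> r \<le> norm (x - e)
        \<Longrightarrow> c * norm (x - e) \<le> norm ((y - x) - v)" by blast
    from H have "norm ((g (Suc n) - \<rho> (Suc n)) - v) \<le> c * r / 2"
      and "norm (\<rho> (Suc n) - e) \<le> min r (c^2 * r / 16)" by simp_all
    then show "norm (a (Suc n) - e)^2 \<le> max (r^2) (norm (a n - e)^2 / (1 + c^2/8))"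
      unfolding a_step b_step g_def \<rho>_def
      by (intro metric_proj_comp_contraction[OF closed_As convex_As nonempty_As
            closed_Bs convex_Bs nonempty_Bs gap_n \<open>0 < r\<close>]) (use \<open>0 < c\<close> in simp_all)
  qed
  then have "\<forall>\<^sub>F n in sequentially. norm (a n - e)^2 \<le> r^2"
    using \<open>0 < c\<close> \<open>0 < r\<close> by (intro eventually_le_if_eventually_contracting) auto
  then show ?thesis
  proof (rule eventually_mono)
    fix n assume "norm (a n - e)^2 \<le> r^2"
    then show "norm (a n - e) \<le> r" by (rule power2_le_imp_le) (use \<open>0 < r\<close> in simp)
  qed
qed

lemma perturbed_alternating_projections_tendsto:
  shows "a \<longlonglongrightarrow> e" and "b \<longlonglongrightarrow> metric_proj B e"
proof -
  show "a \<longlonglongrightarrow> e"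
  proof (rule tendstoI)
    fix \<epsilon> :: real assume "0 < \<epsilon>"
    then have "\<forall>\<^sub>F n in sequentially. norm (a n - e) \<le> \<epsilon>/2"
      by (intro perturbed_iterates_eventually_near) simp
    then show "\<forall>\<^sub>F n in sequentially. dist (a n) e < \<epsilon>"
      by (rule eventually_mono) (use \<open>0 < \<epsilon>\<close> in \<open>simp add: dist_norm\<close>)
  qed
  have "(\<lambda>n. b (Suc n) - metric_proj (Bs (Suc n)) e) \<longlonglongrightarrow> 0"
  proof (rule Lim_null_comparison)
    show "\<forall>\<^sub>F n in sequentially. norm (b (Suc n) - metric_proj (Bs (Suc n)) e) \<le> norm (a n - e)"
      unfolding b_step
      by (intro always_eventually allI metric_proj_nonexpansive[OF closed_Bs convex_Bs nonempty_Bs])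
    show "(\<lambda>n. norm (a n - e)) \<longlonglongrightarrow> 0"
      using \<open>a \<longlonglongrightarrow> e\<close> by (simp add: tendsto_norm_zero LIM_zero)
  qed
  moreover have "(\<lambda>n. metric_proj (Bs (Suc n)) e) \<longlonglongrightarrow> metric_proj B e"
    using LIMSEQ_Suc[OF perturbed_anchors_tendsto(1)[OF e_fixed]] .
  ultimately have "(\<lambda>n. (b (Suc n) - metric_proj (Bs (Suc n)) e) + metric_proj (Bs (Suc n)) e)
      \<longlonglongrightarrow> 0 + metric_proj B e" by (rule tendsto_add)
  then show "b \<longlonglongrightarrow> metric_proj B e" by (simp add: LIMSEQ_imp_Suc)
qed

end

end


theorem corollary4p18:
  fixes A B :: "'a::{real_inner, complete_space} set"
  assumes "body A" and "body B" and "LUR A"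
    and "best_A A B \<noteq> {}" and "best_B A B \<noteq> {}"
  shows "stable A B"
  unfolding stable_def
proof (intro allI impI)
  fix As Bs :: "nat \<Rightarrow> 'a set" and a b :: "nat \<Rightarrow> 'a"
  assume sets: "(\<forall>n. closed (As n) \<and> convex (As n) \<and> As n \<noteq> {}) \<and>
      (\<forall>n. closed (Bs n) \<and> convex (Bs n) \<and> Bs n \<noteq> {}) \<and> AW_converges As A \<and> AW_converges Bs B"
    and steps: "\<forall>n. b (Suc n) = metric_proj (Bs (Suc n)) (a n) \<and> a (Suc n) = metric_proj (As (Suc n)) (b (Suc n))"
  from sets have As: "\<And>n. closed (As n)" "\<And>n. convex (As n)" "\<And>n. As n \<noteq> {}"
    and Bs: "\<And>n. closed (Bs n)" "\<And>n. convex (Bs n)" "\<And>n. Bs n \<noteq> {}"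
    and AW: "AW_converges As A" "AW_converges Bs B" by blast+
  have b_step: "b (Suc n) = metric_proj (Bs (Suc n)) (a n)" for n
    using spec[OF steps, of n] by (rule conjunct1)
  have a_step: "a (Suc n) = metric_proj (As (Suc n)) (b (Suc n))" for n
    using spec[OF steps, of n] by (rule conjunct2)
  have A: "closed A" "convex A" "A \<noteq> {}" and B: "closed B" "convex B" "B \<noteq> {}"
    and "interior B \<noteq> {}"
    using assms(1,2) interior_empty unfolding body_def by metis+
  show "convergent a \<and> convergent b"
  proof (cases "interior A \<inter> B = {}")
    case False
    obtain c r where "0 < r" "cball c r \<subseteq> A" "cball c r \<subseteq> B"
      by (rule convex_interior_Int_common_cball[OF B(2) \<open>interior B \<noteq> {}\<close> False])
    have "\<forall>\<^sub>F n in sequentially. cball c (r/2) \<subseteq> As n \<and> cball c (r/2) \<subseteq> Bs n"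
      using AW_converges_eventually_cball_subset[OF AW(1) As \<open>cball c r \<subseteq> A\<close> \<open>0 < r\<close>]
        AW_converges_eventually_cball_subset[OF AW(2) Bs \<open>cball c r \<subseteq> B\<close> \<open>0 < r\<close>]
      by (rule eventually_conj)
    then show ?thesis
      by (rule alternating_projections_convergent_if_common_ball[where a = a and b = b, OF As Bs _ _ b_step a_step])
        (use \<open>0 < r\<close> in simp)
  next
    case True
    obtain e where e: "e \<in> best_A A B" using assms(4) by blast
    then have "e \<in> A" by (simp add: best_A_def)
    have "LUR_point A e"
      using best_A_in_frontier[OF B A(1) True e] \<open>LUR A\<close> by (simp add: LUR_def)
    then have "best_approx_well_posed A B e"
      by (rule LUR_point_best_approx_well_posed[OF A(2) B(2) True _ \<open>e \<in> A\<close> metric_proj_in[OF B]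
            norm_metric_proj_best_A[OF B e]])
    then have "a \<longlonglongrightarrow> e" "b \<longlonglongrightarrow> metric_proj B e"
      using perturbed_alternating_projections_tendsto[where a = a and b = b, OF A B As Bs AW _
          norm_metric_proj_best_A[OF B e] metric_proj_metric_proj_best_A[OF B A(1,2) e] b_step a_step]
      by simp_all
    then show ?thesis unfolding convergent_def by blast
  qed
qed

end
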